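(* For every sequence ${\mathbf s}=(s_1,\dots,s_l)$ in $\widehat{\mathcal S}$ with $l\ge1$ the sum defining ${\mathcal X}_T({\mathbf s})$ is direct: ${\mathcal X}_T({\mathbf s})=\Delta({\mathcal X}_T({\mathbf s}'))\oplus c^{\alpha_l}\big(\Delta({\mathcal X}_T({\mathbf s}'))\big)$. In particular, for every sequence ${\mathbf s}$ of length $l$, ${\mathcal X}_T({\mathbf s})$ is a graded free $S_T$-module of graded rank $(1+v^2)^l$ (i.e. it has a homogeneous basis with $\binom lk$ elements of degree $2k$ for each $k$).
   Context: $R$ is an irreducible reduced finite root system with positive roots $R^+$, simple roots $\Pi$, highest root $\gamma$; $X$ its weight lattice, $\widehat X=X\oplus\mathbb Z$, $\delta=(0,-1)$, affine roots $\widehat R=\{\alpha+n\delta\}$. $\widehat{\mathcal W}$ is the affine Weyl group generated by $s_{\alpha,n}(v,m)=(v-(\langle\alpha,v\rangle-mn)\alpha^\vee,m)$ on $V^*\oplus\mathbb Q$, acting contragrediently on $\widehat X$; $\widehat{\mathcal S}=\{s_{\alpha,0}:\alpha\in\Pi\}\cup\{s_{\gamma,1}\}$; the simple affine root attached to $s_{\alpha,0}$ is $\alpha$ and to $s_{\gamma,1}$ is $-\gamma+\delta$. $T$ is a commutative unital domain in which $2$ is not a zero divisor and in which all $\alpha\otimes1\in\widehat X\otimes T$, $\alpha\in\widehat R$, are nonzero. $S_T$ is the symmetric algebra of $\widehat X\otimes T$, graded with $\widehat X\otimes T$ in degree $2$. For ${\mathbf s}=(s_1,\dots,s_l)$, $I({\mathbf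 s})$ is the set of tuples $(i_1<\dots<i_n)$, $0\le n\le l$, in $\{1,\dots,l\}$, and $\operatorname{ev}(i_1,\dots,i_n)=s_{i_1}\cdots s_{i_n}$. For $l\ge1$ let ${\mathbf s}'=(s_1,\dots,s_{l-1})$; regard $I({\mathbf s}')\subset I({\mathbf s})$ and write $\gamma s_l$ for $\gamma$ with $l$ appended, so $I({\mathbf s})=I({\mathbf s}')\sqcup I({\mathbf s}')s_l$. $\Delta\colon\bigoplus_{I({\mathbf s}')}S_T\to\bigoplus_{I({\mathbf s})}S_T$ is given by $\Delta(z)_\gamma=\Delta(z)_{\gamma s_l}=z_\gamma$. For $\lambda\in\widehat X$, $c^\lambda$ is the endomorphism of $\bigoplus_{\sigma\in I({\mathbf s})}S_T$ multiplying the $\sigma$-component by $\operatorname{ev}(\sigma)(\lambda)\otimes1$. $\alpha_l$ is the simple affine root of $s_l$. Define ${\mathcal X}_T(\emptyset)=S_T$ and ${\mathcal X}_T({\mathbf s})=\Delta({\mathcal X}_T({\mathbf s}'))+c^{\alpha_l}(\Delta({\mathcal X}_T({\mathbf s}')))\subset\bigoplus_{\sigma\in I({\mathbf s})}S_T$. *)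

theory Defs
  imports "HOL-Analysis.Analysis" "HOL-Library.Poly_Mapping"
begin

definition cp :: "'v::euclidean_space \<Rightarrow> 'v \<Rightarrow> real" where
  "cp lam a = 2 * (lam \<bullet> a) / (a \<bullet> a)"

definition refl :: "'v::euclidean_space \<Rightarrow> 'v \<Rightarrow> 'v" where
  "refl a lam = lam - cp lam a *\<^sub>R a"

definition root_system :: "'v::euclidean_space set \<Rightarrow> bool" where
  "root_system R \<longleftrightarrow> finite R \<and> 0 \<notin> R \<and> span R = UNIV
     \<and> (\<forall>a\<in>R. \<forall>b\<in>R. refl a b \<in> R)
     \<and> (\<forall>a\<in>R. \<forall>b\<in>R. cp b a \<in> \<int>)"

definition reduced_rs :: "'v::euclidean_space set \<Rightarrow> bool" where
  "reduced_rs R \<longleftrightarrow> (\<forall>a\<in>R. \<forall>c::real. c *\<^sub>R a \<in> R \<longrightarrow> c = 1 \<or> c = -1)"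

definition irreducible_rs :: "'v::euclidean_space set \<Rightarrow> bool" where
  "irreducible_rs R \<longleftrightarrow> \<not> (\<exists>A B. A \<noteq> {} \<and> B \<noteq> {} \<and> A \<union> B = R \<and> A \<inter> B = {}
        \<and> (\<forall>a\<in>A. \<forall>b\<in>B. a \<bullet> b = 0))"

definition is_base :: "'v::euclidean_space set \<Rightarrow> 'v set \<Rightarrow> bool" where
  "is_base R Sm \<longleftrightarrow> Sm \<subseteq> R \<and> independent Sm \<and>
     (\<forall>b\<in>R. \<exists>c::'v \<Rightarrow> int. b = (\<Sum>a\<in>Sm. of_int (c a) *\<^sub>R a) \<and>
        ((\<forall>a\<in>Sm. c a \<ge> 0) \<or> (\<forall>a\<in>Sm. c a \<le> 0)))"

definition highest_root :: "'v::euclidean_space set \<Rightarrow> 'v set \<Rightarrow> 'v \<Rightarrow> bool" where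
  "highest_root R Sm gam \<longleftrightarrow> gam \<in> R \<and>
     (\<forall>b\<in>R. \<exists>c::'v \<Rightarrow> nat. gam - b = (\<Sum>a\<in>Sm. of_nat (c a) *\<^sub>R a))"

definition weights :: "'v::euclidean_space set \<Rightarrow> 'v set" where
  "weights R = {lam. \<forall>a\<in>R. cp lam a \<in> \<int>}"

section \<open>Affine data: X^ = X (+) Z, elements (lam, k); delta = (0,-1)\<close>

text \<open>Labels of simple affine reflections: Some a means s_{a,0} (a simple),
  None means s_{gam,1}.\<close>
definition labels :: "'v set \<Rightarrow> 'v option set" where
  "labels Sm = insert None (Some ` Sm)"

text \<open>Contragredient action of s_{a,n} on X^:
  (lam,k) maps to (lam - <lam,a^vee> a, k - n <lam,a^vee>).\<close>
definition aff_refl :: "'v::euclidean_space \<Rightarrow> int \<Rightarrow> 'v \<times> int \<Rightarrow> 'v \<times> int" where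
  "aff_refl a n x = (refl a (fst x), snd x - n * \<lfloor>cp (fst x) a\<rfloor>)"

fun act :: "'v::euclidean_space \<Rightarrow> 'v option \<Rightarrow> 'v \<times> int \<Rightarrow> 'v \<times> int" where
  "act gam (Some a) = aff_refl a 0"
| "act gam None = aff_refl gam 1"

text \<open>Simple affine root: a for s_{a,0}; -gam + delta = (-gam, -1) for s_{gam,1}.\<close>
fun aroot :: "'v::euclidean_space \<Rightarrow> 'v option \<Rightarrow> 'v \<times> int" where
  "aroot gam (Some a) = (a, 0)"
| "aroot gam None = (- gam, -1)"

text \<open>Index tuples (i_1 < ... < i_n) in {1..l} are encoded as subsets of {0..<l}
  (0-based positions in the list s).  ev s sg = s_{i_1} ... s_{i_n}.\<close>
definition ev :: "'v::euclidean_space \<Rightarrow> 'v option list \<Rightarrow> nat set \<Rightarrow> 'v \<times> int \<Rightarrow> 'v \<times> int" where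
  "ev gam s sg = foldr (\<lambda>i. act gam (s ! i)) (sorted_list_of_set sg)"

section \<open>S_T = Sym(X^ (x) T), as polynomial ring over T in the coordinates
  w.r.t. the Z-basis (fundamental weights, (0,1)) of X^\<close>

type_synonym ('v, 'T) sym = "('v option \<Rightarrow>\<^sub>0 nat) \<Rightarrow>\<^sub>0 'T"

definition Var :: "'v option \<Rightarrow> ('v, 'T::comm_ring_1) sym" where
  "Var v = Poly_Mapping.single (Poly_Mapping.single v 1) 1"

definition SymAlg :: "'v set \<Rightarrow> ('v, 'T::comm_ring_1) sym set" where
  "SymAlg Sm = {p. \<forall>m\<in>Poly_Mapping.keys p. Poly_Mapping.keys m \<subseteq> labels Sm}"

text \<open>lam (x) 1 for lam = (mu, k) in X^: mu = sum_a <mu,a^vee> omega_a.\<close>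
definition tens :: "'v::euclidean_space set \<Rightarrow> 'v \<times> int \<Rightarrow> ('v, 'T::comm_ring_1) sym" where
  "tens Sm x = (\<Sum>a\<in>Sm. of_int \<lfloor>cp (fst x) a\<rfloor> * Var (Some a)) + of_int (snd x) * Var None"

text \<open>Homogeneous of degree d in the grading where X^ (x) T has degree 2.\<close>
definition homog :: "('v, 'T::comm_ring_1) sym \<Rightarrow> nat \<Rightarrow> bool" where
  "homog p d \<longleftrightarrow> (\<forall>m\<in>Poly_Mapping.keys p. 2 * (\<Sum>v\<in>Poly_Mapping.keys m. Poly_Mapping.lookup m v) = d)"

section \<open>The modules X_T(s) inside (+)_{sg in I(s)} S_T\<close>

type_synonym ('v, 'T) dsum = "nat set \<Rightarrow> ('v, 'T) sym"

definition addF :: "('v, 'T::comm_ring_1) dsum \<Rightarrow> ('v, 'T) dsum \<Rightarrow> ('v, 'T) dsum" where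
  "addF x y = (\<lambda>sg. x sg + y sg)"

text \<open>Delta for a sequence of length l: Delta(z)_gamma = Delta(z)_{gamma s_l} = z_gamma.\<close>
definition Delta :: "nat \<Rightarrow> ('v, 'T::comm_ring_1) dsum \<Rightarrow> ('v, 'T) dsum" where
  "Delta l z = (\<lambda>sg. if sg \<subseteq> {..<l} then z (sg - {l - 1}) else 0)"

definition cmul :: "'v::euclidean_space set \<Rightarrow> 'v \<Rightarrow> 'v option list \<Rightarrow> 'v \<times> int
     \<Rightarrow> ('v, 'T::comm_ring_1) dsum \<Rightarrow> ('v, 'T) dsum" where
  "cmul Sm gam s lam F = (\<lambda>sg. tens Sm (ev gam s sg lam) * F sg)"

primrec XT_rev :: "'v::euclidean_space set \<Rightarrow> 'v \<Rightarrow> 'v option list \<Rightarrow> ('v, 'T::comm_ring_1) dsum set" where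
  "XT_rev Sm gam [] = {F. \<exists>p\<in>SymAlg Sm. F = (\<lambda>sg. if sg = {} then p else 0)}"
| "XT_rev Sm gam (a # rs) =
     (let s = rev rs @ [a]; l = length s; M = XT_rev Sm gam rs in
       {addF x y | x y. x \<in> Delta l ` M \<and> y \<in> cmul Sm gam s (aroot gam a) ` (Delta l ` M)})"

definition XT :: "'v::euclidean_space set \<Rightarrow> 'v \<Rightarrow> 'v option list \<Rightarrow> ('v, 'T::comm_ring_1) dsum set" where
  "XT Sm gam s = XT_rev Sm gam (rev s)"

definition graded_free :: "'v set \<Rightarrow> ('v, 'T::comm_ring_1) dsum set \<Rightarrow> nat \<Rightarrow> bool" where
  "graded_free Sm M l \<longleftrightarrow> (\<exists>(N::nat) (b::nat \<Rightarrow> ('v, 'T) dsum) (dg::nat \<Rightarrow> nat).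
      (\<forall>j<N. b j \<in> M \<and> (\<forall>sg. homog (b j sg) (dg j)))
    \<and> (\<forall>d. card {j. j < N \<and> dg j = d} = (if even d then l choose (d div 2) else 0))
    \<and> (\<forall>x\<in>M. \<exists>!p::nat \<Rightarrow> ('v, 'T) sym. (\<forall>j. p j \<in> SymAlg Sm) \<and> (\<forall>j\<ge>N. p j = 0)
                 \<and> x = (\<lambda>sg. \<Sum>j<N. p j * b j sg)))"

end

theory Submission
  imports Defs
begin

text \<open>Let \<open>k\<close> be the last position of \<open>s\<close> and \<open>g \<subseteq> {0..<k}\<close>. Since the simple reflection
  \<open>s\<^sub>k\<close> negates its simple affine root \<open>\<alpha>\<close>, the components of \<open>\<Delta>(y) + c\<^sup>\<alpha>(\<Delta>(z))\<close> at \<open>g\<close> and at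
  \<open>g \<union> {k}\<close> are \<open>y\<^sub>g + t z\<^sub>g\<close> and \<open>y\<^sub>g - t z\<^sub>g\<close>, where \<open>t = ev(g)(\<alpha>) \<otimes> 1\<close> is a nonzero linear
  form. A nonzero linear form is not a zero divisor in the polynomial ring and 2 is not a zero
  divisor in \<open>T\<close>, so \<open>y\<close> and \<open>z\<close> can be read off and the sum is direct. Consequently a homogeneous
  basis of \<open>X\<^sub>T(s')\<close> yields one of \<open>X\<^sub>T(s)\<close>: its image under \<open>\<Delta>\<close> together with its image under
  \<open>c\<^sup>\<alpha> \<circ> \<Delta>\<close>, shifted by degree 2; by induction the graded rank is \<open>(1 + v\<^sup>2)\<^sup>l\<close>.\<close>

lemma lookup_mult_unique_sum:
  fixes f g :: "'a::monoid_add \<Rightarrow>\<^sub>0 'b::semiring_0"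
  assumes uniq: "\<And>a' b'. a' \<in> Poly_Mapping.keys f \<Longrightarrow> b' \<in> Poly_Mapping.keys g \<Longrightarrow>
                   a' + b' = a + b \<Longrightarrow> a' = a \<and> b' = b"
  shows "Poly_Mapping.lookup (f * g) (a + b) = Poly_Mapping.lookup f a * Poly_Mapping.lookup g b"
proof -
  let ?term = "\<lambda>(a', b'). Poly_Mapping.lookup f a' * Poly_Mapping.lookup g b'"
  have "Poly_Mapping.lookup (f * g) (a + b) = Sum_any (\<lambda>ab. ?term ab when a + b = fst ab + snd ab)"
    by transfer (simp add: prod_fun_unfold_prod split_def)
  also have "\<dots> = Sum_any (\<lambda>ab. ?term ab when (a, b) = ab)"
  proof (rule Sum_any.cong)
    fix ab :: "'a \<times> 'a"
    obtain a' b' where ab: "ab = (a', b')" by (cases ab)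
    show "(?term ab when a + b = fst ab + snd ab) = (?term ab when (a, b) = ab)"
    proof (cases "a' \<in> Poly_Mapping.keys f \<and> b' \<in> Poly_Mapping.keys g")
      case True
      then show ?thesis using uniq[of a' b'] by (auto simp: ab when_def)
    next
      case False
      then show ?thesis by (auto simp: ab when_def in_keys_iff)
    qed
  qed
  also have "\<dots> = Poly_Mapping.lookup f a * Poly_Mapping.lookup g b"
    by simp
  finally show ?thesis .
qed

definition linear_form :: "(('a \<Rightarrow>\<^sub>0 nat) \<Rightarrow>\<^sub>0 'b::zero) \<Rightarrow> bool" where
  "linear_form p \<longleftrightarrow> (\<forall>m\<in>Poly_Mapping.keys p. \<exists>v. m = Poly_Mapping.single v 1)"

lemma linear_form_add:
  fixes p q :: "('a \<Rightarrow>\<^sub>0 nat) \<Rightarrow>\<^sub>0 'b::monoid_add"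
  shows "linear_form p \<Longrightarrow> linear_form q \<Longrightarrow> linear_form (p + q)"
  unfolding linear_form_def using keys_add[of p q] by blast

lemma linear_form_sum:
  fixes f :: "'c \<Rightarrow> ('a \<Rightarrow>\<^sub>0 nat) \<Rightarrow>\<^sub>0 'b::comm_monoid_add"
  shows "(\<And>a. a \<in> A \<Longrightarrow> linear_form (f a)) \<Longrightarrow> linear_form (sum f A)"
  by (induction A rule: infinite_finite_induct) (simp_all add: linear_form_add linear_form_def[of 0])

lemma linear_form_of_int_Var: "linear_form (of_int n * Var v)"
  by (simp add: linear_form_def Var_def mult_single flip: single_of_int) blast

lemma linear_form_tens: "linear_form (tens Sm x)"
  unfolding tens_def by (intro linear_form_add linear_form_sum linear_form_of_int_Var)

text \<open>If the variable \<open>v\<close> occurs in \<open>t\<close> and \<open>m\<close> is a monomial of \<open>w\<close> of maximal \<open>v\<close>-degree,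
  then \<open>v \<cdot> m\<close> arises in exactly one way as a product of monomials of \<open>t\<close> and \<open>w\<close>.\<close>
lemma linear_form_mult_nonzero:
  fixes t w :: "('a \<Rightarrow>\<^sub>0 nat) \<Rightarrow>\<^sub>0 'b::semiring_no_zero_divisors"
  assumes "linear_form t" "t \<noteq> 0" "w \<noteq> 0"
  shows "t * w \<noteq> 0"
proof -
  obtain m0 where "m0 \<in> Poly_Mapping.keys t" using assms(2) keys_eq_empty by blast
  then obtain v where v: "Poly_Mapping.single v 1 \<in> Poly_Mapping.keys t"
    using assms(1) unfolding linear_form_def by metis
  let ?deg = "\<lambda>m. Poly_Mapping.lookup m v"
  let ?D = "?deg ` Poly_Mapping.keys w"
  have D: "finite ?D" "?D \<noteq> {}" using assms(3) by auto
  obtain m where m: "m \<in> Poly_Mapping.keys w" "?deg m = Max ?D"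
    using Max_in[OF D] by (metis imageE)
  have "a = Poly_Mapping.single v 1 \<and> b = m"
    if a: "a \<in> Poly_Mapping.keys t" and b: "b \<in> Poly_Mapping.keys w"
      and sum: "a + b = Poly_Mapping.single v 1 + m" for a b
  proof -
    obtain u where u: "a = Poly_Mapping.single u 1" using a assms(1) unfolding linear_form_def by blast
    have "?deg a + ?deg b = 1 + ?deg m" using arg_cong[OF sum, of ?deg] by (simp add: lookup_add)
    moreover have "?deg b \<le> ?deg m" using Max_ge[OF D(1)] b m(2) by simp
    ultimately have "u = v" by (simp add: u lookup_single when_def split: if_splits)
    then show ?thesis using sum u by simp
  qed
  then have "Poly_Mapping.lookup (t * w) (Poly_Mapping.single v 1 + m)
               = Poly_Mapping.lookup t (Poly_Mapping.single v 1) * Poly_Mapping.lookup w m"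
    by (rule lookup_mult_unique_sum)
  also have "\<dots> \<noteq> 0" using v m(1) by (simp add: in_keys_iff)
  finally show ?thesis by auto
qed

lemma double_eq_zero_imp_eq_zero:
  fixes p :: "'a \<Rightarrow>\<^sub>0 'b::semiring_1"
  assumes "\<forall>c::'b. 2 * c = 0 \<longrightarrow> c = 0" "p + p = 0"
  shows "p = 0"
proof (rule poly_mapping_eqI)
  fix k
  have "2 * Poly_Mapping.lookup p k = 0"
    using arg_cong[OF assms(2), of "\<lambda>q. Poly_Mapping.lookup q k"] by (simp add: lookup_add mult_2)
  then show "Poly_Mapping.lookup p k = Poly_Mapping.lookup 0 k" using assms(1) by simp
qed

lemma linear_form_plus_minus_cancel:
  fixes t y z y' z' :: "('a \<Rightarrow>\<^sub>0 nat) \<Rightarrow>\<^sub>0 'b::{comm_ring_1, semiring_no_zero_divisors}"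
  assumes "\<forall>c::'b. 2 * c = 0 \<longrightarrow> c = 0" "linear_form t" "t \<noteq> 0"
    and plus: "y + t * z = y' + t * z'" and minus: "y - t * z = y' - t * z'"
  shows "y = y' \<and> z = z'"
proof -
  have "t * ((z - z') + (z - z')) = (y + t * z) - (y - t * z) - ((y' + t * z') - (y' - t * z'))"
    by (simp add: algebra_simps)
  also have "\<dots> = 0"
    unfolding plus minus by simp
  finally have "z - z' = 0"
    using linear_form_mult_nonzero[OF assms(2,3)] double_eq_zero_imp_eq_zero[OF assms(1)] by blast
  then have "z = z'" by simp
  with plus show ?thesis by simp
qed

lemma homog_iff_Sum_any:
  "homog p d \<longleftrightarrow> (\<forall>m\<in>Poly_Mapping.keys p. 2 * Sum_any (Poly_Mapping.lookup m) = d)"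
  by (simp add: homog_def Sum_any.expand_set keys.rep_eq)

lemma homog_mult:
  assumes "homog p d" "homog q e" shows "homog (p * q) (d + e)"
  unfolding homog_iff_Sum_any
proof
  fix m assume "m \<in> Poly_Mapping.keys (p * q)"
  then obtain a b where m: "m = a + b" and "a \<in> Poly_Mapping.keys p" "b \<in> Poly_Mapping.keys q"
    using keys_mult by blast
  then have "2 * Sum_any (Poly_Mapping.lookup a) = d" "2 * Sum_any (Poly_Mapping.lookup b) = e"
    using assms unfolding homog_iff_Sum_any by blast+
  moreover have "Sum_any (Poly_Mapping.lookup m) = Sum_any (Poly_Mapping.lookup a) + Sum_any (Poly_Mapping.lookup b)"
    unfolding m lookup_add by (rule Sum_any.distrib) (simp_all flip: keys.rep_eq)
  ultimately show "2 * Sum_any (Poly_Mapping.lookup m) = d + e" by simp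
qed

lemma homog_zero: "homog 0 d"
  by (simp add: homog_def)

lemma linear_form_homog: "linear_form p \<Longrightarrow> homog p 2"
  by (auto simp: linear_form_def homog_def)

lemma cp_uminus: "cp (- b) a = - cp b a"
  by (simp add: cp_def)

lemma refl_uminus: "refl a (- b) = - refl a b"
  by (simp add: refl_def cp_uminus algebra_simps)

lemma refl_self: "a \<noteq> 0 \<Longrightarrow> refl a a = - a"
  by (simp add: refl_def cp_def scaleR_2 algebra_simps)

lemma cp_self: "a \<noteq> 0 \<Longrightarrow> cp a a = 2"
  by (simp add: cp_def)

lemma aff_refl_uminus:
  assumes "cp (fst x) a \<in> \<int>"
  shows "aff_refl a n (- x) = - aff_refl a n x"
proof -
  from assms obtain k :: int where "cp (fst x) a = k" by (rule Ints_cases)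
  then show ?thesis by (simp add: aff_refl_def refl_uminus cp_uminus)
qed

lemma act_root:
  assumes "root_system R" "Sm \<subseteq> R" "gam \<in> R" "lab \<in> labels Sm" "fst x \<in> R"
  shows "fst (act gam lab x) \<in> R" and "act gam lab (- x) = - act gam lab x"
proof -
  obtain a n where a: "a \<in> R" and act: "act gam lab = aff_refl a n"
    using assms(2-4) by (cases lab) (auto simp: labels_def)
  show "fst (act gam lab x) \<in> R"
    using assms(1,5) a by (simp add: act aff_refl_def root_system_def)
  have "cp (fst x) a \<in> \<int>"
    using assms(1,5) a by (simp add: root_system_def)
  then show "act gam lab (- x) = - act gam lab x"
    by (simp add: act aff_refl_uminus)
qed

lemma act_aroot:
  assumes "root_system R" "Sm \<subseteq> R" "gam \<in> R" "lab \<in> labels Sm"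
  shows "fst (aroot gam lab) \<in> R" and "act gam lab (aroot gam lab) = - aroot gam lab"
proof -
  have nz: "a \<noteq> 0" if "a \<in> R" for a
    using assms(1) that by (auto simp: root_system_def)
  have "- gam \<in> R"
    using assms(1,3) refl_self[OF nz[OF assms(3)]] by (metis root_system_def)
  then show "fst (aroot gam lab) \<in> R" "act gam lab (aroot gam lab) = - aroot gam lab"
    using assms(2-4) nz[OF assms(3)]
    by (cases lab; auto simp: labels_def aff_refl_def refl_self refl_uminus cp_uminus cp_self nz)+
qed

lemma act_foldr_root:
  assumes "root_system R" "Sm \<subseteq> R" "gam \<in> R" "\<forall>i\<in>set is. s ! i \<in> labels Sm" "fst x \<in> R"
  shows "fst (foldr (\<lambda>i. act gam (s ! i)) is x) \<in> R
    \<and> foldr (\<lambda>i. act gam (s ! i)) is (- x) = - foldr (\<lambda>i. act gam (s ! i)) is x"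
  using assms(4) by (induction "is") (simp_all add: assms(5) act_root[OF assms(1-3)])

lemma ev_root:
  assumes "root_system R" "Sm \<subseteq> R" "gam \<in> R" "set s \<subseteq> labels Sm"
    and "g \<subseteq> {..<length s}" "fst x \<in> R"
  shows "fst (ev gam s g x) \<in> R" and "ev gam s g (- x) = - ev gam s g x"
proof -
  have "finite g" using assms(5) finite_subset by blast
  then have "\<forall>i\<in>set (sorted_list_of_set g). s ! i \<in> labels Sm"
    using assms(4,5) by (auto simp: subset_iff)
  then show "fst (ev gam s g x) \<in> R" "ev gam s g (- x) = - ev gam s g x"
    unfolding ev_def using act_foldr_root[OF assms(1-3) _ assms(6)] by blast+
qed

lemma ev_insert_greater:
  assumes "finite g" "\<forall>i\<in>g. i < k"
  shows "ev gam s (insert k g) x = ev gam s g (act gam (s ! k) x)"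
proof -
  have "k \<notin> g" using assms(2) by blast
  then have "sorted_list_of_set (insert k g) = sorted_list_of_set g @ [k]"
    using assms by (simp add: less_imp_le sorted_insort_is_snoc)
  then show ?thesis by (simp add: ev_def)
qed

lemma tens_uminus:
  assumes "root_system R" "Sm \<subseteq> R" "fst x \<in> R"
  shows "tens Sm (- x) = - tens Sm x"
proof -
  have "\<lfloor>cp (- fst x) a\<rfloor> = - \<lfloor>cp (fst x) a\<rfloor>" if "a \<in> Sm" for a
  proof -
    have "cp (fst x) a \<in> \<int>"
      using assms that by (auto simp: root_system_def)
    then obtain k :: int where "cp (fst x) a = k" by (rule Ints_cases)
    then show ?thesis by (simp add: cp_uminus)
  qed
  then show ?thesis
    by (simp add: tens_def sum_negf[symmetric] algebra_simps cong: sum.cong)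
qed

definition supported :: "nat \<Rightarrow> (nat set \<Rightarrow> 'a::zero) \<Rightarrow> bool" where
  "supported n F \<longleftrightarrow> (\<forall>sg. \<not> sg \<subseteq> {..<n} \<longrightarrow> F sg = 0)"

lemma XT_Nil: "XT Sm gam [] = {F. \<exists>p\<in>SymAlg Sm. F = (\<lambda>sg. if sg = {} then p else 0)}"
  by (simp add: XT_def)

lemma XT_snoc:
  "XT Sm gam (s @ [a]) =
     {addF x y | x y. x \<in> Delta (Suc (length s)) ` XT Sm gam s
        \<and> y \<in> cmul Sm gam (s @ [a]) (aroot gam a) ` Delta (Suc (length s)) ` XT Sm gam s}"
  by (simp add: XT_def Let_def)

lemma XT_supported:
  assumes "F \<in> XT Sm gam s" shows "supported (length s) F"
proof (cases s rule: rev_cases)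
  case Nil
  with assms show ?thesis by (auto simp: XT_Nil supported_def split: if_splits)
next
  case (snoc s' a)
  with assms show ?thesis by (auto simp: XT_snoc supported_def addF_def Delta_def cmul_def split: if_splits)
qed

lemma zero_in_XT: "(\<lambda>_. 0) \<in> XT Sm gam s"
proof (induction s rule: rev_induct)
  case Nil
  have "(\<lambda>_. 0) = (\<lambda>sg::nat set. if sg = {} then 0 else 0)" "0 \<in> SymAlg Sm"
    by (simp_all add: SymAlg_def)
  then show ?case unfolding XT_Nil by blast
next
  case (snoc a s)
  have "(\<lambda>_. 0) = addF (Delta (Suc (length s)) (\<lambda>_. 0))
                      (cmul Sm gam (s @ [a]) (aroot gam a) (Delta (Suc (length s)) (\<lambda>_. 0)))"
    by (simp add: addF_def Delta_def cmul_def fun_eq_iff)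
  then show ?case using snoc unfolding XT_snoc by blast
qed

lemma Delta_cmul_components:
  assumes "g \<subseteq> {..<l - 1}" "0 < l"
  shows "addF (Delta l y) (cmul Sm gam s \<alpha> (Delta l z)) g = y g + tens Sm (ev gam s g \<alpha>) * z g"
    and "addF (Delta l y) (cmul Sm gam s \<alpha> (Delta l z)) (insert (l - 1) g)
           = y g + tens Sm (ev gam s (insert (l - 1) g) \<alpha>) * z g"
proof -
  have "g \<subseteq> {..<l}" "insert (l - 1) g \<subseteq> {..<l}" "g - {l - 1} = g" "insert (l - 1) g - {l - 1} = g"
    using assms by auto
  then show "addF (Delta l y) (cmul Sm gam s \<alpha> (Delta l z)) g = y g + tens Sm (ev gam s g \<alpha>) * z g"
    and "addF (Delta l y) (cmul Sm gam s \<alpha> (Delta l z)) (insert (l - 1) g)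
           = y g + tens Sm (ev gam s (insert (l - 1) g) \<alpha>) * z g"
    by (simp_all add: addF_def Delta_def cmul_def)
qed

lemma Delta_cmul_inj:
  fixes y z y' z' :: "('v::euclidean_space, 'T::idom) dsum"
  assumes rs: "root_system R" "Sm \<subseteq> R" "gam \<in> R"
    and two: "\<forall>c::'T. 2 * c = 0 \<longrightarrow> c = 0"
    and nz: "\<forall>a\<in>R. \<forall>k::int. tens Sm (a, k) \<noteq> (0::('v, 'T) sym)"
    and s: "set s \<subseteq> labels Sm" "s \<noteq> []"
    and supp: "supported (length s - 1) y" "supported (length s - 1) z"
      "supported (length s - 1) y'" "supported (length s - 1) z'"
    and eq: "addF (Delta (length s) y) (cmul Sm gam s (aroot gam (last s)) (Delta (length s) z))
           = addF (Delta (length s) y') (cmul Sm gam s (aroot gam (last s)) (Delta (length s) z'))"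
  shows "y = y' \<and> z = z'"
proof -
  let ?k = "length s - 1" and ?\<alpha> = "aroot gam (last s)"
  have on_support: "y g = y' g \<and> z g = z' g" if g: "g \<subseteq> {..<?k}" for g
  proof -
    define t where "t = (tens Sm (ev gam s g ?\<alpha>) :: ('v, 'T) sym)"
    have last: "last s \<in> labels Sm" "s ! ?k = last s"
      using s by (auto simp: last_conv_nth)
    have g_lt: "g \<subseteq> {..<length s}" "finite g" "\<forall>i\<in>g. i < ?k"
      using g finite_subset by auto
    have root: "fst (ev gam s g ?\<alpha>) \<in> R"
      by (rule ev_root(1)[OF rs s(1) g_lt(1) act_aroot(1)[OF rs last(1)]])
    have "ev gam s (insert ?k g) ?\<alpha> = ev gam s g (act gam (s ! ?k) ?\<alpha>)"
      by (rule ev_insert_greater[OF g_lt(2,3)])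
    also have "\<dots> = ev gam s g (- ?\<alpha>)"
      using act_aroot(2)[OF rs last(1)] last(2) by simp
    also have "\<dots> = - ev gam s g ?\<alpha>"
      by (rule ev_root(2)[OF rs s(1) g_lt(1) act_aroot(1)[OF rs last(1)]])
    finally have t_neg: "tens Sm (ev gam s (insert ?k g) ?\<alpha>) = - t"
      unfolding t_def using tens_uminus[OF rs(1,2) root] by simp
    have "t \<noteq> 0"
      unfolding t_def using nz root by (metis prod.collapse)
    moreover have "y g + t * z g = y' g + t * z' g" "y g - t * z g = y' g - t * z' g"
      using Delta_cmul_components[of g "length s" y Sm gam s ?\<alpha> z]
        Delta_cmul_components[of g "length s" y' Sm gam s ?\<alpha> z'] g s(2) eq t_neg
      by (simp_all add: t_def)
    ultimately show ?thesis
      using linear_form_plus_minus_cancel[OF two linear_form_tens] unfolding t_def by blast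
  qed
  have "y g = y' g \<and> z g = z' g" for g
    using on_support supp by (cases "g \<subseteq> {..<?k}") (simp_all add: supported_def)
  then show ?thesis by (simp add: fun_eq_iff)
qed

definition lincomb :: "nat \<Rightarrow> (nat \<Rightarrow> 'a::semiring_0) \<Rightarrow> (nat \<Rightarrow> nat set \<Rightarrow> 'a) \<Rightarrow> nat set \<Rightarrow> 'a" where
  "lincomb N p b = (\<lambda>sg. \<Sum>j<N. p j * b j sg)"

definition basis_coords :: "'v set \<Rightarrow> nat \<Rightarrow> (nat \<Rightarrow> ('v, 'T::comm_ring_1) dsum) \<Rightarrow> ('v, 'T) dsum
    \<Rightarrow> (nat \<Rightarrow> ('v, 'T) sym) \<Rightarrow> bool" where
  "basis_coords Sm N b x p \<longleftrightarrow> (\<forall>j. p j \<in> SymAlg Sm) \<and> (\<forall>j\<ge>N. p j = 0) \<and> x = lincomb N p b"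

definition graded_basis :: "'v set \<Rightarrow> ('v, 'T::comm_ring_1) dsum set \<Rightarrow> nat \<Rightarrow> nat
    \<Rightarrow> (nat \<Rightarrow> ('v, 'T) dsum) \<Rightarrow> (nat \<Rightarrow> nat) \<Rightarrow> bool" where
  "graded_basis Sm M l N b dg \<longleftrightarrow> (\<forall>j<N. b j \<in> M \<and> (\<forall>sg. homog (b j sg) (dg j)))
     \<and> (\<forall>d. card {j. j < N \<and> dg j = d} = (if even d then l choose (d div 2) else 0))
     \<and> (\<forall>x\<in>M. \<exists>!p. basis_coords Sm N b x p)"

lemma graded_free_iff_graded_basis:
  "graded_free Sm M l \<longleftrightarrow> (\<exists>N b dg. graded_basis Sm M l N b dg)"
  by (simp add: graded_free_def graded_basis_def basis_coords_def lincomb_def)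

lemma lincomb_cong:
  "(\<And>j. j < N \<Longrightarrow> p j = q j) \<Longrightarrow> (\<And>j. j < N \<Longrightarrow> b j = b' j) \<Longrightarrow> lincomb N p b = lincomb N q b'"
  by (simp add: lincomb_def)

lemma lincomb_add_split:
  "lincomb (N + K) p b = (\<lambda>sg. lincomb N p b sg + lincomb K (\<lambda>j. p (N + j)) (\<lambda>j. b (N + j)) sg)"
  by (induction K) (simp_all add: lincomb_def fun_eq_iff add.assoc)

lemma supported_lincomb: "(\<And>j. j < N \<Longrightarrow> supported n (b j)) \<Longrightarrow> supported n (lincomb N p b)"
  by (simp add: supported_def lincomb_def)

lemma Delta_lincomb: "Delta l (lincomb N p b) = lincomb N p (\<lambda>j. Delta l (b j))"
  by (simp add: Delta_def lincomb_def fun_eq_iff)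

lemma mult_lincomb:
  fixes w :: "nat set \<Rightarrow> 'a::comm_semiring_0"
  shows "(\<lambda>sg. w sg * lincomb N p b sg) = lincomb N p (\<lambda>j sg. w sg * b j sg)"
  by (simp add: lincomb_def sum_distrib_left mult.left_commute)

lemma card_degrees_doubled:
  fixes dg :: "nat \<Rightarrow> nat"
  assumes count: "\<forall>d. card {j. j < N \<and> dg j = d} = (if even d then l choose (d div 2) else 0)"
  shows "card {j. j < N + N \<and> (if j < N then dg j else dg (j - N) + 2) = d}
           = (if even d then Suc l choose (d div 2) else 0)"
proof -
  let ?A = "\<lambda>d. {j. j < N \<and> dg j = d}"
  have split: "{j. j < N + N \<and> (if j < N then dg j else dg (j - N) + 2) = d}
                 = ?A d \<union> (\<lambda>j. N + j) ` {j. j < N \<and> dg j + 2 = d}"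
  proof (rule set_eqI)
    fix j
    show "j \<in> {j. j < N + N \<and> (if j < N then dg j else dg (j - N) + 2) = d}
            \<longleftrightarrow> j \<in> ?A d \<union> (\<lambda>j. N + j) ` {j. j < N \<and> dg j + 2 = d}"
      by (cases "j < N") (auto simp: image_iff intro!: exI[of _ "j - N"])
  qed
  have "card {j. j < N + N \<and> (if j < N then dg j else dg (j - N) + 2) = d}
          = card (?A d) + card {j. j < N \<and> dg j + 2 = d}"
    unfolding split by (subst card_Un_disjoint) (auto simp: card_image)
  also have "\<dots> = (if even d then Suc l choose (d div 2) else 0)"
  proof (cases "d < 2")
    case True
    then have "d = 0 \<or> d = 1" by auto
    then show ?thesis using count by auto
  next
    case False
    then obtain e where e: "d = Suc (Suc e)" by (metis add_2_eq_Suc le_add_diff_inverse not_less)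
    have "{j. j < N \<and> dg j + 2 = d} = ?A e" using e by auto
    then show ?thesis using count by (simp add: e)
  qed
  finally show ?thesis .
qed

lemma lincomb_doubled_basis:
  assumes c_eq: "\<And>F. c F = (\<lambda>sg. w sg * F sg)"
  shows "lincomb (N + N) P (\<lambda>j. if j < N then Delta l (b j) else c (Delta l (b (j - N))))
           = addF (Delta l (lincomb N P b)) (c (Delta l (lincomb N (\<lambda>j. P (N + j)) b)))"
proof -
  let ?b' = "\<lambda>j. if j < N then Delta l (b j) else c (Delta l (b (j - N)))"
  have "lincomb N P ?b' = lincomb N P (\<lambda>j. Delta l (b j))"
    "lincomb N (\<lambda>j. P (N + j)) (\<lambda>j. ?b' (N + j)) = lincomb N (\<lambda>j. P (N + j)) (\<lambda>j. c (Delta l (b j)))"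
    by (rule lincomb_cong; simp)+
  then show ?thesis
    by (simp add: lincomb_add_split Delta_lincomb c_eq mult_lincomb addF_def)
qed

lemma ex1_basis_coords_doubled:
  fixes c :: "('v, 'T::comm_ring_1) dsum \<Rightarrow> ('v, 'T) dsum"
  assumes c_eq: "\<And>F. c F = (\<lambda>sg. w sg * F sg)"
    and inj: "\<And>y z y' z'. supported n y \<Longrightarrow> supported n z \<Longrightarrow> supported n y' \<Longrightarrow> supported n z' \<Longrightarrow>
       addF (Delta (Suc n) y) (c (Delta (Suc n) z)) = addF (Delta (Suc n) y') (c (Delta (Suc n) z'))
       \<Longrightarrow> y = y' \<and> z = z'"
    and b_supp: "\<And>j. j < N \<Longrightarrow> supported n (b j)"
    and y: "\<exists>!p. basis_coords Sm N b y p" "supported n y"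
    and z: "\<exists>!q. basis_coords Sm N b z q" "supported n z"
  shows "\<exists>!P. basis_coords Sm (N + N) (\<lambda>j. if j < N then Delta (Suc n) (b j) else c (Delta (Suc n) (b (j - N))))
                (addF (Delta (Suc n) y) (c (Delta (Suc n) z))) P"
proof -
  obtain p q where p: "basis_coords Sm N b y p" and q: "basis_coords Sm N b z q"
    using y(1) z(1) by blast
  let ?b' = "\<lambda>j. if j < N then Delta (Suc n) (b j) else c (Delta (Suc n) (b (j - N)))"
  define R where "R = (\<lambda>j. if j < N then p j else if j < N + N then q (j - N) else 0)"
  note comb = lincomb_doubled_basis[OF c_eq]
  show ?thesis
  proof (rule ex1I[of _ R])
    have "lincomb N R b = y" "lincomb N (\<lambda>j. R (N + j)) b = z"
      using p q by (auto simp: basis_coords_def R_def intro: lincomb_cong)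
    then show "basis_coords Sm (N + N) ?b' (addF (Delta (Suc n) y) (c (Delta (Suc n) z))) R"
      using p q by (auto simp: basis_coords_def R_def comb SymAlg_def)
  next
    fix P assume P: "basis_coords Sm (N + N) ?b' (addF (Delta (Suc n) y) (c (Delta (Suc n) z))) P"
    have "lincomb N P b = y \<and> lincomb N (\<lambda>j. P (N + j)) b = z"
    proof (rule inj)
      show "addF (Delta (Suc n) (lincomb N P b)) (c (Delta (Suc n) (lincomb N (\<lambda>j. P (N + j)) b)))
              = addF (Delta (Suc n) y) (c (Delta (Suc n) z))"
        using P by (simp add: basis_coords_def comb)
    qed (use y z b_supp supported_lincomb in blast)+
    then have "basis_coords Sm N b y (\<lambda>j. if j < N then P j else 0)"
      "basis_coords Sm N b z (\<lambda>j. if j < N then P (N + j) else 0)"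
      using P by (auto simp: basis_coords_def SymAlg_def intro!: lincomb_cong)
    then have "(\<lambda>j. if j < N then P j else 0) = p" "(\<lambda>j. if j < N then P (N + j) else 0) = q"
      using y(1) z(1) p q by blast+
    then show "P = R"
      using P unfolding R_def basis_coords_def fun_eq_iff
      by (metis add_diff_inverse_nat nat_add_left_cancel_less not_less)
  qed
qed

lemma graded_basis_double:
  fixes M :: "('v, 'T::comm_ring_1) dsum set" and c :: "('v, 'T) dsum \<Rightarrow> ('v, 'T) dsum"
  assumes basis: "graded_basis Sm M n N b dg"
    and supp: "\<forall>F\<in>M. supported n F" and zero: "(\<lambda>_. 0) \<in> M"
    and c_eq: "\<And>F. c F = (\<lambda>sg. w sg * F sg)" and w: "\<And>sg. homog (w sg) 2"
    and inj: "\<And>y z y' z'. supported n y \<Longrightarrow> supported n z \<Longrightarrow> supported n y' \<Longrightarrow> supported n z' \<Longrightarrow>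
       addF (Delta (Suc n) y) (c (Delta (Suc n) z)) = addF (Delta (Suc n) y') (c (Delta (Suc n) z'))
       \<Longrightarrow> y = y' \<and> z = z'"
  shows "graded_basis Sm {addF x y | x y. x \<in> Delta (Suc n) ` M \<and> y \<in> c ` Delta (Suc n) ` M} (Suc n)
           (N + N) (\<lambda>j. if j < N then Delta (Suc n) (b j) else c (Delta (Suc n) (b (j - N))))
           (\<lambda>j. if j < N then dg j else dg (j - N) + 2)"
proof -
  let ?D = "Delta (Suc n)"
  define b' where "b' = (\<lambda>j. if j < N then ?D (b j) else c (?D (b (j - N))))"
  from basis have bM: "\<And>j. j < N \<Longrightarrow> b j \<in> M"
    and bh: "\<And>j sg. j < N \<Longrightarrow> homog (b j sg) (dg j)"
    and count: "\<forall>d. card {j. j < N \<and> dg j = d} = (if even d then n choose (d div 2) else 0)"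
    and coords: "\<And>x. x \<in> M \<Longrightarrow> \<exists>!p. basis_coords Sm N b x p"
    unfolding graded_basis_def by blast+
  have zero_sums: "?D (\<lambda>_. 0) = (\<lambda>_. 0)" "c (\<lambda>_. 0) = (\<lambda>_. 0)"
    by (simp_all add: Delta_def c_eq fun_eq_iff)
  show ?thesis
    unfolding graded_basis_def b'_def[symmetric]
  proof (intro conjI allI impI ballI)
    fix j assume j: "j < N + N"
    have "b' j = (if j < N then addF (?D (b j)) (c (?D (\<lambda>_. 0)))
                  else addF (?D (\<lambda>_. 0)) (c (?D (b (j - N)))))"
      by (simp add: b'_def zero_sums addF_def)
    then show "b' j \<in> {addF x y | x y. x \<in> ?D ` M \<and> y \<in> c ` ?D ` M}"
      using bM[of j] bM[of "j - N"] j zero by (cases "j < N") force+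
    fix sg
    have "homog (?D (b i) sg) (dg i)" if "i < N" for i
      using bh[OF that] by (simp add: Delta_def homog_zero)
    then show "homog (b' j sg) (if j < N then dg j else dg (j - N) + 2)"
      using homog_mult[OF w] j by (simp add: b'_def c_eq add.commute)
  next
    fix d
    show "card {j. j < N + N \<and> (if j < N then dg j else dg (j - N) + 2) = d}
            = (if even d then Suc n choose (d div 2) else 0)"
      by (rule card_degrees_doubled[OF count])
  next
    fix x assume "x \<in> {addF x y | x y. x \<in> ?D ` M \<and> y \<in> c ` ?D ` M}"
    then obtain y z where "y \<in> M" "z \<in> M" and x: "x = addF (?D y) (c (?D z))"
      by blast
    then show "\<exists>!P. basis_coords Sm (N + N) b' x P"
      unfolding x b'_def using bM supp coords
      by (intro ex1_basis_coords_doubled[OF c_eq inj]) blast+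
  qed
qed

lemma graded_basis_XT_Nil:
  "graded_basis Sm (XT Sm gam [] :: ('v::euclidean_space, 'T::comm_ring_1) dsum set) 0 1
     (\<lambda>_ sg. if sg = {} then 1 else 0) (\<lambda>_. 0)"
  unfolding graded_basis_def
proof (intro conjI allI impI ballI)
  have "1 \<in> SymAlg Sm" by (simp add: SymAlg_def)
  then show "(\<lambda>sg. if sg = {} then 1 else 0) \<in> XT Sm gam []"
    unfolding XT_Nil by blast
  fix d :: nat
  show "card {j::nat. j < 1 \<and> 0 = d} = (if even d then 0 choose (d div 2) else 0)"
    by (cases "d = 0") (auto elim: evenE)
next
  fix x :: "('v, 'T) dsum" assume "x \<in> XT Sm gam []"
  then obtain p where p: "p \<in> SymAlg Sm" "x = (\<lambda>sg. if sg = {} then p else 0)"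
    by (auto simp: XT_Nil)
  show "\<exists>!P. basis_coords Sm 1 (\<lambda>_ sg. if sg = {} then 1 else 0) x P"
  proof (rule ex1I[of _ "\<lambda>j. if j = 0 then p else 0"])
    show "basis_coords Sm 1 (\<lambda>_ sg. if sg = {} then 1 else 0) x (\<lambda>j. if j = 0 then p else 0)"
      using p by (auto simp: basis_coords_def lincomb_def SymAlg_def)
  next
    fix P assume "basis_coords Sm 1 (\<lambda>_ sg. if sg = {} then 1 else 0) x P"
    then have "P 0 = x {}" "\<forall>j\<ge>1. P j = 0"
      by (simp_all add: basis_coords_def lincomb_def)
    then show "P = (\<lambda>j. if j = 0 then p else 0)"
      using p(2) by (auto simp: fun_eq_iff)
  qed
qed (simp add: homog_def)

lemma XT_butlast:
  "s \<noteq> [] \<Longrightarrow> XT Sm gam s =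
     {addF x y | x y. x \<in> Delta (length s) ` XT Sm gam (butlast s)
        \<and> y \<in> cmul Sm gam s (aroot gam (last s)) ` Delta (length s) ` XT Sm gam (butlast s)}"
  using XT_snoc[of Sm gam "butlast s" "last s"] by simp

context
  fixes R Sm :: "'v::euclidean_space set" and gam :: 'v
  assumes rs: "root_system R" "Sm \<subseteq> R" "gam \<in> R"
    and two: "\<forall>c::'T::idom. 2 * c = 0 \<longrightarrow> c = 0"
    and nz: "\<forall>a\<in>R. \<forall>k::int. tens Sm (a, k) \<noteq> (0::('v, 'T) sym)"
begin

lemma XT_decomposition_unique:
  assumes s: "set s \<subseteq> labels Sm" "s \<noteq> []" and x: "x \<in> (XT Sm gam s :: ('v, 'T) dsum set)"
  defines "M \<equiv> XT Sm gam (butlast s)" and "c \<equiv> cmul Sm gam s (aroot gam (last s))"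
  shows "\<exists>!yz. fst yz \<in> Delta (length s) ` M \<and> snd yz \<in> c ` Delta (length s) ` M \<and> x = addF (fst yz) (snd yz)"
proof -
  have supp: "supported (length s - 1) F" if "F \<in> M" for F
    using XT_supported[OF that[unfolded M_def]] by simp
  from x obtain y z where yz: "y \<in> M" "z \<in> M" "x = addF (Delta (length s) y) (c (Delta (length s) z))"
    unfolding XT_butlast[OF s(2)] M_def c_def by blast
  show ?thesis
  proof (rule ex1I[of _ "(Delta (length s) y, c (Delta (length s) z))"])
    show "fst (Delta (length s) y, c (Delta (length s) z)) \<in> Delta (length s) ` M
      \<and> snd (Delta (length s) y, c (Delta (length s) z)) \<in> c ` Delta (length s) ` M
      \<and> x = addF (fst (Delta (length s) y, c (Delta (length s) z))) (snd (Delta (length s) y, c (Delta (length s) z)))"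
      using yz by simp
  next
    fix w assume w: "fst w \<in> Delta (length s) ` M \<and> snd w \<in> c ` Delta (length s) ` M \<and> x = addF (fst w) (snd w)"
    then obtain y' z' where y'z': "y' \<in> M" "z' \<in> M" "fst w = Delta (length s) y'" "snd w = c (Delta (length s) z')"
      by blast
    have "addF (Delta (length s) y') (c (Delta (length s) z')) = addF (Delta (length s) y) (c (Delta (length s) z))"
      using w yz(3) y'z' by simp
    then have "y' = y \<and> z' = z"
      using Delta_cmul_inj[OF rs two nz s supp[OF y'z'(1)] supp[OF y'z'(2)] supp[OF yz(1)] supp[OF yz(2)]]
      unfolding c_def by blast
    then show "w = (Delta (length s) y, c (Delta (length s) z))"
      using y'z' by (simp add: prod_eq_iff)
  qed
qed

lemma graded_free_XT:
  "set s \<subseteq> labels Sm \<Longrightarrow> graded_free Sm (XT Sm gam s :: ('v, 'T) dsum set) (length s)"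
proof (induction s rule: rev_induct)
  case Nil
  show ?case unfolding graded_free_iff_graded_basis using graded_basis_XT_Nil by fastforce
next
  case (snoc a s)
  then obtain N b dg where "graded_basis Sm (XT Sm gam s :: ('v, 'T) dsum set) (length s) N b dg"
    by (auto simp: graded_free_iff_graded_basis)
  then have "graded_basis Sm (XT Sm gam (s @ [a]) :: ('v, 'T) dsum set) (Suc (length s)) (N + N)
      (\<lambda>j. if j < N then Delta (Suc (length s)) (b j)
           else cmul Sm gam (s @ [a]) (aroot gam a) (Delta (Suc (length s)) (b (j - N))))
      (\<lambda>j. if j < N then dg j else dg (j - N) + 2)"
    unfolding XT_snoc
  proof (rule graded_basis_double)
    show "\<forall>F\<in>XT Sm gam s. supported (length s) F" using XT_supported by blast
    show "(\<lambda>_. 0) \<in> XT Sm gam s" by (rule zero_in_XT)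
    show "cmul Sm gam (s @ [a]) (aroot gam a) F = (\<lambda>sg. tens Sm (ev gam (s @ [a]) sg (aroot gam a)) * F sg)"
      for F :: "('v, 'T) dsum" by (simp add: cmul_def)
    show "homog (tens Sm (ev gam (s @ [a]) sg (aroot gam a)) :: ('v, 'T) sym) 2" for sg
      by (rule linear_form_homog[OF linear_form_tens])
  next
    fix y z y' z' :: "('v, 'T) dsum"
    assume "supported (length s) y" "supported (length s) z" "supported (length s) y'" "supported (length s) z'"
      "addF (Delta (Suc (length s)) y) (cmul Sm gam (s @ [a]) (aroot gam a) (Delta (Suc (length s)) z))
       = addF (Delta (Suc (length s)) y') (cmul Sm gam (s @ [a]) (aroot gam a) (Delta (Suc (length s)) z'))"
    then show "y = y' \<and> z = z'"
      using Delta_cmul_inj[OF rs two nz snoc.prems] by simp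
  qed
  then show ?case by (auto simp: graded_free_iff_graded_basis)
qed

end

theorem lemma6p2:
  fixes R Sm :: "'v::euclidean_space set" and gam :: 'v
  assumes "root_system R" and "reduced_rs R" and "irreducible_rs R"
    and "is_base R Sm" and "highest_root R Sm gam"
    and "\<forall>t::'T::idom. 2 * t = 0 \<longrightarrow> t = 0"
    and "\<forall>a\<in>R. \<forall>k::int. tens Sm (a, k) \<noteq> (0 :: ('v, 'T) sym)"
  shows "(\<forall>s. set s \<subseteq> labels Sm \<longrightarrow> s \<noteq> [] \<longrightarrow>
            (let l = length s; M = (XT Sm gam (butlast s) :: ('v, 'T) dsum set);
                 c = cmul Sm gam s (aroot gam (last s)) in
              XT Sm gam s = {addF x y | x y. x \<in> Delta l ` M \<and> y \<in> c ` Delta l ` M}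
              \<and> (\<forall>x\<in>XT Sm gam s. \<exists>!yz. fst yz \<in> Delta l ` M \<and> snd yz \<in> c ` Delta l ` M
                                   \<and> x = addF (fst yz) (snd yz))))
       \<and> (\<forall>s. set s \<subseteq> labels Sm \<longrightarrow> graded_free Sm (XT Sm gam s :: ('v, 'T) dsum set) (length s))"
proof -
  have rs: "root_system R" "Sm \<subseteq> R" "gam \<in> R"
    using assms(1,4,5) by (simp_all add: is_base_def highest_root_def)
  show ?thesis
  proof (intro conjI allI impI)
    fix s assume s: "set s \<subseteq> labels Sm" "s \<noteq> []"
    show "let l = length s; M = (XT Sm gam (butlast s) :: ('v, 'T) dsum set);
                 c = cmul Sm gam s (aroot gam (last s)) in
              XT Sm gam s = {addF x y | x y. x \<in> Delta l ` M \<and> y \<in> c ` Delta l ` M}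
              \<and> (\<forall>x\<in>XT Sm gam s. \<exists>!yz. fst yz \<in> Delta l ` M \<and> snd yz \<in> c ` Delta l ` M
                                   \<and> x = addF (fst yz) (snd yz))"
      unfolding Let_def
      using XT_butlast[OF s(2)] XT_decomposition_unique[OF rs assms(6,7) s] by (intro conjI ballI)
  qed (rule graded_free_XT[OF rs assms(6,7)])
qed

end
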